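(* Let $(\mathsf{X},\mathscr{X})$ be a measurable space and $P$ a Markov kernel on $\mathsf{X}\times\mathscr{X}$. For any probability measures $\xi$ and $\xi'$ on $(\mathsf{X},\mathscr{X})$, any integer $n\geqslant 1$, any $c=(c_0,\ldots,c_{n-1})\in \mathbb{R}_+^n$ and any measurable $h:\mathsf{X}^n\to\mathbb{R}$ satisfying $|h(x)-h(y)|\leqslant \sum_{i=0}^{n-1}c_i\mathbf{1}_{\{x_i\neq y_i\}}$ for all $x=(x_0,\ldots,x_{n-1}),y=(y_0,\ldots,y_{n-1})\in\mathsf{X}^n$, we have \[ \big|\mathbb{E}_\xi[h(X_0,\ldots,X_{n-1})]-\mathbb{E}_{\xi'}[h(X_0,\ldots,X_{n-1})]\big|\leqslant 2\sum_{i=0}^{n-1}c_i\, \mathrm{d}_{\mathrm{TV}}(\xi P^i,\xi'P^i)\;. \]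
   Context: For a probability measure $\xi$ on $(\mathsf{X},\mathscr{X})$, $\mathbb{P}_\xi$ denotes the law of the Markov chain $(X_k)_{k\geqslant 0}$ (canonical process on $\mathsf{X}^{\mathbb{Z}_+}$) with Markov kernel $P$ and initial distribution $\xi$, and $\mathbb{E}_\xi$ its expectation. $\xi P^i$ is the law of $X_i$ under $\mathbb{P}_\xi$. $\mathrm{d}_{\mathrm{TV}}(\mu,\nu)=\sup_{A\in\mathscr{X}}|\mu(A)-\nu(A)|$ denotes the total variation distance between probability measures. *)

theory Defs
  imports "HOL-Probability.Probability"
begin

text \<open>Law of (X_0,...,X_{n-1}) of the Markov chain with kernel K and initial law xi,
  as a measure on X^n = PiM {..<n} (\<lambda>_. M).  Built recursively: X_0 ~ xi,
  X_{k+1} ~ K(X_k) given the past.\<close>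
fun path_law :: "'a measure \<Rightarrow> ('a \<Rightarrow> 'a measure) \<Rightarrow> 'a measure \<Rightarrow> nat \<Rightarrow> (nat \<Rightarrow> 'a) measure" where
  "path_law M K xi 0 = return (PiM {..<0} (\<lambda>_. M)) (\<lambda>_. undefined)"
| "path_law M K xi (Suc n) =
     bind (path_law M K xi n)
       (\<lambda>\<omega>. distr (if n = 0 then xi else K (\<omega> (n - 1))) (PiM {..<Suc n} (\<lambda>_. M))
               (\<lambda>y. \<lambda>i\<in>{..<Suc n}. if i = n then y else \<omega> i))"

definition kernel_pow :: "('a \<Rightarrow> 'a measure) \<Rightarrow> nat \<Rightarrow> 'a measure \<Rightarrow> 'a measure" where
  "kernel_pow K i xi = ((\<lambda>\<mu>. bind \<mu> K) ^^ i) xi"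

definition dTV :: "'a measure \<Rightarrow> 'a measure \<Rightarrow> 'a measure \<Rightarrow> real" where
  "dTV M \<mu> \<nu> = (SUP A\<in>sets M. \<bar>measure \<mu> A - measure \<nu> A\<bar>)"

end

theory Submission
  imports Defs
begin

text \<open>
  Fix a point y0 and reset the coordinates of a path to y0 one at a time, from the front. This
  telescopes h into h(y0,...,y0) + \<Sum>k G_k(x_k,...,x_{n-1}), where G_k, the change of h caused by
  resetting coordinate k, is bounded by c_k. By the Markov property, the expectation of
  G_k(X_k,...,X_{n-1}) for the chain started at \<xi> is the integral over \<xi>P^k of
  y \<mapsto> E_y[G_k(X_0,...,X_{n-k-1})], which is again bounded by c_k. Finally,
  |\<integral>\<psi> d\<mu> - \<integral>\<psi> d\<nu>| \<le> 2c d_TV(\<mu>,\<nu>) whenever |\<psi>| \<le> c; for [0,1]-valued functions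
  this follows by approximating them from below by the simple functions \<lfloor>N f\<rfloor>/N.
\<close>

section \<open>Finite paths\<close>

definition path_snoc :: "nat \<Rightarrow> (nat \<Rightarrow> 'a) \<Rightarrow> 'a \<Rightarrow> nat \<Rightarrow> 'a" where
  "path_snoc n \<omega> y = (\<lambda>i\<in>{..<Suc n}. if i = n then y else \<omega> i)"

definition path_shift :: "nat \<Rightarrow> nat \<Rightarrow> (nat \<Rightarrow> 'a) \<Rightarrow> nat \<Rightarrow> 'a" where
  "path_shift m k x = (\<lambda>j\<in>{..<m}. x (j + k))"

lemma path_shift_0: "path_shift 0 k x = (\<lambda>_. undefined)"
  by (simp add: path_shift_def fun_eq_iff)

lemma path_shift_path_shift: "path_shift m 1 (path_shift (Suc m) k x) = path_shift m (Suc k) x"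
  by (auto simp: path_shift_def fun_eq_iff)

lemma path_shift_path_snoc: "path_shift (Suc m) 1 (path_snoc (Suc m) \<omega> y) = path_snoc m (path_shift m 1 \<omega>) y"
  by (auto simp: path_shift_def path_snoc_def fun_eq_iff)

lemma path_shift_0_id:
  "x \<in> space (PiM {..<n} (\<lambda>_. M)) \<Longrightarrow> path_shift n 0 x = x"
  by (auto simp: path_shift_def space_PiM PiE_def extensional_def fun_eq_iff)

lemma space_PiM_lessThan_0: "space (PiM {..<0::nat} (\<lambda>_. M)) = {\<lambda>_. undefined}"
  by (simp add: space_PiM)

lemma measurable_path_snoc_pair:
  "(\<lambda>(\<omega>, y). path_snoc n \<omega> y) \<in> PiM {..<n} (\<lambda>_. M) \<Otimes>\<^sub>M M \<rightarrow>\<^sub>M PiM {..<Suc n} (\<lambda>_. M)"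
  unfolding path_snoc_def case_prod_beta
  by (rule measurable_restrict) (auto simp: less_Suc_eq)

lemma measurable_path_snoc:
  "\<omega> \<in> space (PiM {..<n} (\<lambda>_. M)) \<Longrightarrow> path_snoc n \<omega> \<in> M \<rightarrow>\<^sub>M PiM {..<Suc n} (\<lambda>_. M)"
  using measurable_Pair2[OF measurable_path_snoc_pair] by simp

lemma measurable_path_snoc_0: "path_snoc 0 (\<lambda>_. undefined) \<in> M \<rightarrow>\<^sub>M PiM {..<1} (\<lambda>_. M)"
  using measurable_path_snoc[of "\<lambda>_. undefined" 0 M] by (simp add: space_PiM_lessThan_0)

lemma measurable_path_shift:
  "m + k \<le> n \<Longrightarrow> path_shift m k \<in> PiM {..<n} (\<lambda>_. M) \<rightarrow>\<^sub>M PiM {..<m} (\<lambda>_. M)"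
  unfolding path_shift_def by (rule measurable_restrict) auto

section \<open>Total variation and integrals of bounded functions\<close>

lemma dTV_commute: "dTV M \<mu> \<nu> = dTV M \<nu> \<mu>"
  unfolding dTV_def by (simp add: abs_minus_commute)

lemma measure_diff_le_dTV:
  assumes "\<mu> \<in> space (prob_algebra M)" "\<nu> \<in> space (prob_algebra M)" "A \<in> sets M"
  shows "measure \<mu> A - measure \<nu> A \<le> dTV M \<mu> \<nu>"
proof -
  have "\<bar>measure \<mu> B - measure \<nu> B\<bar> \<le> 1" for B
  proof -
    have "measure \<mu> B \<le> 1" "measure \<nu> B \<le> 1"
      using assms(1,2) by (auto simp: space_prob_algebra intro: prob_space.prob_le_1)
    then show ?thesis using measure_nonneg[of \<mu> B] measure_nonneg[of \<nu> B] by linarith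
  qed
  then have "bdd_above ((\<lambda>B. \<bar>measure \<mu> B - measure \<nu> B\<bar>) ` sets M)"
    by (intro bdd_aboveI) auto
  then have "\<bar>measure \<mu> A - measure \<nu> A\<bar> \<le> dTV M \<mu> \<nu>"
    unfolding dTV_def using assms(3) by (rule cSUP_upper2) simp
  then show ?thesis by simp
qed

lemma integrable_bounded_prob_algebra:
  fixes f :: "'a \<Rightarrow> real"
  assumes "\<rho> \<in> space (prob_algebra M)" "f \<in> borel_measurable M" "\<And>x. x \<in> space M \<Longrightarrow> \<bar>f x\<bar> \<le> B"
  shows "integrable \<rho> f"
proof -
  have sets: "sets \<rho> = sets M" and "prob_space \<rho>"
    using assms(1) by (auto simp: space_prob_algebra)
  then show ?thesis
    using assms(2,3) sets_eq_imp_space_eq[OF sets] measurable_cong_sets[OF sets refl]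
    by (intro finite_measure.integrable_const_bound[of \<rho> f B] AE_I2) (auto intro: prob_space.finite_measure)
qed

lemma abs_integral_le_bound_prob_algebra:
  fixes f :: "'a \<Rightarrow> real"
  assumes "\<rho> \<in> space (prob_algebra M)" "f \<in> borel_measurable M" "\<And>x. x \<in> space M \<Longrightarrow> \<bar>f x\<bar> \<le> B"
  shows "\<bar>\<integral>x. f x \<partial>\<rho>\<bar> \<le> B"
proof -
  have sets_\<rho>: "sets \<rho> = sets M" and prob: "prob_space \<rho>"
    using assms(1) by (auto simp: space_prob_algebra)
  from sets_\<rho> have "space \<rho> = space M"
    by (rule sets_eq_imp_space_eq)
  then have "(\<integral>x. \<bar>f x\<bar> \<partial>\<rho>) \<le> B"
    using assms(3) integrable_abs[OF integrable_bounded_prob_algebra[OF assms]]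
    by (intro prob_space.integral_le_const[OF prob] AE_I2) auto
  then show ?thesis
    using integral_abs_bound[of \<rho> f] by linarith
qed

lemma sum_indicator_le_eq_floor:
  fixes t :: real
  assumes "0 \<le> t" "t \<le> real N"
  shows "(\<Sum>j\<in>{1..N}. if real j \<le> t then 1 else 0 :: real) = of_int \<lfloor>t\<rfloor>"
proof -
  have le_t: "real j \<le> t \<longleftrightarrow> j \<le> nat \<lfloor>t\<rfloor>" for j
    using assms(1) by (simp add: le_nat_iff le_floor_iff)
  have "nat \<lfloor>t\<rfloor> \<le> N"
    using assms(2) le_t by (metis floor_of_nat floor_mono nat_int nat_mono)
  then have "{1..N} \<inter> {j. real j \<le> t} = {1..nat \<lfloor>t\<rfloor>}"
    by (auto simp: le_t)
  then have "(\<Sum>j\<in>{1..N}. if real j \<le> t then 1 else 0 :: real) = real (nat \<lfloor>t\<rfloor>)"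
    by (simp add: sum.If_cases)
  then show ?thesis using assms(1) by simp
qed

lemma integral_sum_indicator_diff_le_dTV:
  assumes \<mu>: "\<mu> \<in> space (prob_algebra M)" and \<nu>: "\<nu> \<in> space (prob_algebra M)"
    and A: "\<And>j. j \<in> J \<Longrightarrow> A j \<in> sets M"
  shows "(\<integral>x. (\<Sum>j\<in>J. indicator (A j) x) \<partial>\<mu>) - (\<integral>x. (\<Sum>j\<in>J. indicator (A j) x) \<partial>\<nu>)
    \<le> real (card J) * dTV M \<mu> \<nu>"
proof -
  have integral_sum_indicator: "(\<integral>x. (\<Sum>j\<in>J. indicator (A j) x) \<partial>\<rho>) = (\<Sum>j\<in>J. measure \<rho> (A j))"
    if \<rho>: "\<rho> \<in> space (prob_algebra M)" for \<rho>
  proof -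
    have "integrable \<rho> (indicator (A j) :: 'a \<Rightarrow> real)" if "j \<in> J" for j
      using \<rho> A[OF that] by (intro integrable_bounded_prob_algebra[where B=1]) auto
    moreover have "A j \<inter> space \<rho> = A j" if "j \<in> J" for j
      using \<rho> sets.sets_into_space[OF A[OF that]] sets_eq_imp_space_eq
      by (auto simp: space_prob_algebra)
    ultimately show ?thesis
      by (simp add: Bochner_Integration.integral_sum)
  qed
  have "(\<Sum>j\<in>J. measure \<mu> (A j) - measure \<nu> (A j)) \<le> (\<Sum>j\<in>J. dTV M \<mu> \<nu>)"
    by (intro sum_mono measure_diff_le_dTV[OF \<mu> \<nu> A])
  then show ?thesis
    by (simp add: integral_sum_indicator[OF \<mu>] integral_sum_indicator[OF \<nu>] sum_subtractf)
qed

lemma integral_diff_le_dTV_unit: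
  fixes f :: "'a \<Rightarrow> real"
  assumes \<mu>: "\<mu> \<in> space (prob_algebra M)" and \<nu>: "\<nu> \<in> space (prob_algebra M)"
    and f[measurable]: "f \<in> borel_measurable M"
    and f_01: "\<And>x. x \<in> space M \<Longrightarrow> 0 \<le> f x \<and> f x \<le> 1"
  shows "(\<integral>x. f x \<partial>\<mu>) - (\<integral>x. f x \<partial>\<nu>) \<le> dTV M \<mu> \<nu>"
proof (rule field_le_epsilon)
  fix e :: real assume e: "0 < e"
  obtain N :: nat where "1 / e < real N"
    using reals_Archimedean2 by blast
  moreover from this have "0 < real N"
    using e by (meson divide_pos_pos less_trans zero_less_one)
  ultimately have N: "0 < real N" "1 / real N < e"
    using e by (simp_all add: field_simps)
  define A where "A j = {x \<in> space M. real j \<le> real N * f x}" for j :: nat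
  have A[measurable]: "A j \<in> sets M" for j
    unfolding A_def by measurable
  \<comment> \<open>g = \<lfloor>N f\<rfloor> / N, written through indicators of level sets of f\<close>
  define g where "g x = (\<Sum>j\<in>{1..N}. indicator (A j) x) / real N" for x
  have g[measurable]: "g \<in> borel_measurable M"
    unfolding g_def by measurable
  have g_approx: "f x - 1 / real N \<le> g x \<and> g x \<le> f x" if x: "x \<in> space M" for x
  proof -
    have "(\<Sum>j\<in>{1..N}. indicator (A j) x) = (\<Sum>j\<in>{1..N}. if real j \<le> real N * f x then 1 else 0 :: real)"
      using x by (intro sum.cong) (auto simp: A_def indicator_def)
    also have "\<dots> = of_int \<lfloor>real N * f x\<rfloor>"
      using f_01[OF x] by (intro sum_indicator_le_eq_floor) (auto intro: mult_left_le)
    finally have "real N * g x = of_int \<lfloor>real N * f x\<rfloor>"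
      using N(1) by (simp add: g_def)
    then have "real N * f x - 1 \<le> real N * g x" "real N * g x \<le> real N * f x"
      by linarith+
    then show ?thesis
      using N(1) by (simp add: field_simps mult.commute)
  qed
  have "\<bar>g x\<bar> \<le> 1" "\<bar>f x\<bar> \<le> 1" if "x \<in> space M" for x
    using g_approx[OF that] f_01[OF that] by (auto simp: g_def sum_nonneg)
  then have integrable: "integrable \<rho> f" "integrable \<rho> g" if "\<rho> \<in> space (prob_algebra M)" for \<rho>
    using that by (auto intro!: integrable_bounded_prob_algebra[where B=1])
  have space_eq: "space \<rho> = space M" if "\<rho> \<in> space (prob_algebra M)" for \<rho>
    using that sets_eq_imp_space_eq by (auto simp: space_prob_algebra)
  have "(\<integral>x. f x \<partial>\<mu>) - (\<integral>x. g x \<partial>\<mu>) = (\<integral>x. f x - g x \<partial>\<mu>)"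
    using integrable[OF \<mu>] by simp
  also have "\<dots> \<le> 1 / real N"
    using \<mu> g_approx space_eq[OF \<mu>] integrable[OF \<mu>]
    by (intro prob_space.integral_le_const AE_I2) (force simp: space_prob_algebra)+
  finally have "(\<integral>x. f x \<partial>\<mu>) \<le> (\<integral>x. g x \<partial>\<mu>) + 1 / real N"
    by simp
  moreover have "(\<integral>x. g x \<partial>\<nu>) \<le> (\<integral>x. f x \<partial>\<nu>)"
    using g_approx space_eq[OF \<nu>] integrable[OF \<nu>] by (intro integral_mono) auto
  moreover have "(\<integral>x. g x \<partial>\<mu>) - (\<integral>x. g x \<partial>\<nu>) \<le> dTV M \<mu> \<nu>"
    using integral_sum_indicator_diff_le_dTV[OF \<mu> \<nu>, where J = "{1..N}" and A = A] N(1)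
    by (simp add: g_def diff_divide_distrib[symmetric] divide_le_eq mult.commute)
  ultimately show "(\<integral>x. f x \<partial>\<mu>) - (\<integral>x. f x \<partial>\<nu>) \<le> dTV M \<mu> \<nu> + e"
    using N(2) by linarith
qed

lemma integral_diff_le_dTV:
  fixes \<psi> :: "'a \<Rightarrow> real"
  assumes \<mu>: "\<mu> \<in> space (prob_algebra M)" and \<nu>: "\<nu> \<in> space (prob_algebra M)"
    and \<psi>[measurable]: "\<psi> \<in> borel_measurable M"
    and \<psi>_bounded: "\<And>x. x \<in> space M \<Longrightarrow> \<bar>\<psi> x\<bar> \<le> c"
  shows "(\<integral>x. \<psi> x \<partial>\<mu>) - (\<integral>x. \<psi> x \<partial>\<nu>) \<le> 2 * c * dTV M \<mu> \<nu>"
proof -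
  have integrable: "integrable \<rho> \<psi>" if "\<rho> \<in> space (prob_algebra M)" for \<rho>
    using that \<psi>_bounded by (rule integrable_bounded_prob_algebra[OF _ \<psi>])
  have space_eq: "space \<rho> = space M" if "\<rho> \<in> space (prob_algebra M)" for \<rho>
    using that sets_eq_imp_space_eq by (auto simp: space_prob_algebra)
  obtain x0 where "x0 \<in> space M"
    using \<mu> space_eq[OF \<mu>] prob_space.not_empty by (fastforce simp: space_prob_algebra)
  then consider "c = 0" | "0 < c"
    using \<psi>_bounded by fastforce
  then show ?thesis
  proof cases
    case 1
    then have "(\<integral>x. \<psi> x \<partial>\<rho>) = 0" if "\<rho> \<in> space (prob_algebra M)" for \<rho>
      using \<psi>_bounded space_eq[OF that] by (subst integral_eq_zero_AE) (auto intro: AE_I2)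
    then show ?thesis
      using 1 \<mu> \<nu> by simp
  next
    case 2
    define f where "f x = (\<psi> x + c) / (2 * c)" for x
    have "0 \<le> f x \<and> f x \<le> 1" if "x \<in> space M" for x
      using 2 \<psi>_bounded[OF that] by (auto simp: f_def field_simps abs_le_iff)
    then have "(\<integral>x. f x \<partial>\<mu>) - (\<integral>x. f x \<partial>\<nu>) \<le> dTV M \<mu> \<nu>"
      using \<mu> \<nu> by (intro integral_diff_le_dTV_unit) (auto simp: f_def)
    moreover have integral_f: "(\<integral>x. f x \<partial>\<rho>) = ((\<integral>x. \<psi> x \<partial>\<rho>) + c) / (2 * c)"
      if "\<rho> \<in> space (prob_algebra M)" for \<rho>
    proof -
      interpret prob_space \<rho>
        using that by (simp add: space_prob_algebra)
      show ?thesis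
        using integrable[OF that] by (simp add: f_def Bochner_Integration.integral_add prob_space)
    qed
    ultimately have "((\<integral>x. \<psi> x \<partial>\<mu>) - (\<integral>x. \<psi> x \<partial>\<nu>)) / (2 * c) \<le> dTV M \<mu> \<nu>"
      by (simp add: integral_f[OF \<mu>] integral_f[OF \<nu>] diff_divide_distrib[symmetric])
    then show ?thesis
      using 2 by (simp add: pos_divide_le_eq mult_ac)
  qed
qed

lemma abs_integral_diff_le_dTV:
  fixes \<psi> :: "'a \<Rightarrow> real"
  assumes "\<mu> \<in> space (prob_algebra M)" "\<nu> \<in> space (prob_algebra M)"
    and "\<psi> \<in> borel_measurable M" "\<And>x. x \<in> space M \<Longrightarrow> \<bar>\<psi> x\<bar> \<le> c"
  shows "\<bar>(\<integral>x. \<psi> x \<partial>\<mu>) - (\<integral>x. \<psi> x \<partial>\<nu>)\<bar> \<le> 2 * c * dTV M \<mu> \<nu>"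
  using integral_diff_le_dTV[OF assms] integral_diff_le_dTV[OF assms(2,1,3,4)]
  by (simp add: abs_le_iff dTV_commute)

section \<open>Functions of bounded differences on paths\<close>

lemma bounded_differences_telescope:
  fixes h :: "(nat \<Rightarrow> 'a) \<Rightarrow> real"
  assumes y0: "y0 \<in> space M"
    and h_meas: "h \<in> borel_measurable (PiM {..<n} (\<lambda>_. M))"
    and h_lip: "\<And>x y. x \<in> space (PiM {..<n} (\<lambda>_. M)) \<Longrightarrow> y \<in> space (PiM {..<n} (\<lambda>_. M)) \<Longrightarrow>
        \<bar>h x - h y\<bar> \<le> (\<Sum>i<n. c i * (if x i \<noteq> y i then 1 else 0))"
    and c: "\<And>i. i < n \<Longrightarrow> c i \<ge> 0"
  obtains G a where
    "\<And>k. k < n \<Longrightarrow> G k \<in> borel_measurable (PiM {..<n - k} (\<lambda>_. M))"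
    "\<And>k z. k < n \<Longrightarrow> z \<in> space (PiM {..<n - k} (\<lambda>_. M)) \<Longrightarrow> \<bar>G k z\<bar> \<le> c k"
    "\<And>x. x \<in> space (PiM {..<n} (\<lambda>_. M)) \<Longrightarrow> h x = a + (\<Sum>k<n. G k (path_shift (n - k) k x))"
proof -
  define emb where "emb j k z = (\<lambda>i\<in>{..<n}. if i < j then y0 else z (i - k))"
    for j k :: nat and z :: "nat \<Rightarrow> 'a"
  define G where "G k z = h (emb k k z) - h (emb (Suc k) k z)" for k z
  have emb_meas: "emb j k \<in> PiM {..<n - k} (\<lambda>_. M) \<rightarrow>\<^sub>M PiM {..<n} (\<lambda>_. M)" if "k < n" for j k
    unfolding emb_def using y0 that by (intro measurable_restrict) auto
  have "G k \<in> borel_measurable (PiM {..<n - k} (\<lambda>_. M))" if "k < n" for k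
    unfolding G_def using measurable_compose[OF emb_meas[OF that] h_meas] by measurable
  moreover have "\<bar>G k z\<bar> \<le> c k" if k: "k < n" and z: "z \<in> space (PiM {..<n - k} (\<lambda>_. M))" for k z
  proof -
    let ?x = "emb k k z" and ?y = "emb (Suc k) k z"
    have "(\<Sum>i<n. c i * (if ?x i \<noteq> ?y i then 1 else 0))
        = (\<Sum>i<n. if i = k then c k * (if ?x k \<noteq> ?y k then 1 else 0) else 0)"
      by (intro sum.cong) (auto simp: emb_def)
    also have "\<dots> = c k * (if ?x k \<noteq> ?y k then 1 else 0)"
      using k by simp
    also have "\<dots> \<le> c k"
      using c[OF k] by simp
    finally show ?thesis
      unfolding G_def using measurable_space[OF emb_meas[OF k] z] by (intro order_trans[OF h_lip])
  qed
  moreover have "h x = h (\<lambda>i\<in>{..<n}. y0) + (\<Sum>k<n. G k (path_shift (n - k) k x))"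
    if x: "x \<in> space (PiM {..<n} (\<lambda>_. M))" for x
  proof -
    have "emb j k (path_shift (n - k) k x) = emb j 0 x" if "k \<le> j" "k < n" for j k
      using that by (auto simp: emb_def path_shift_def fun_eq_iff)
    then have "(\<Sum>k<n. G k (path_shift (n - k) k x)) = (\<Sum>k<n. h (emb k 0 x) - h (emb (Suc k) 0 x))"
      by (intro sum.cong) (auto simp: G_def)
    also have "\<dots> = h (emb 0 0 x) - h (emb n 0 x)"
      by (rule sum_lessThan_telescope')
    also have "emb 0 0 x = x"
      using x by (auto simp: emb_def space_PiM PiE_def extensional_def fun_eq_iff)
    also have "emb n 0 x = (\<lambda>i\<in>{..<n}. y0)"
      by (auto simp: emb_def)
    finally show ?thesis by (simp add: restrict_def)
  qed
  ultimately show ?thesis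
    by (rule that)
qed

section \<open>Shifting the path of a Markov chain\<close>

locale markov_kernel =
  fixes M :: "'a measure" and K :: "'a \<Rightarrow> 'a measure"
  assumes kernel: "K \<in> M \<rightarrow>\<^sub>M prob_algebra M"
begin

abbreviation paths :: "nat \<Rightarrow> (nat \<Rightarrow> 'a) measure" where
  "paths m \<equiv> PiM {..<m} (\<lambda>_. M)"

definition transition :: "'a measure \<Rightarrow> nat \<Rightarrow> (nat \<Rightarrow> 'a) \<Rightarrow> (nat \<Rightarrow> 'a) measure" where
  "transition \<mu> n \<omega> = distr (if n = 0 then \<mu> else K (\<omega> (n - 1))) (paths (Suc n)) (path_snoc n \<omega>)"

lemma path_law_Suc_transition: "path_law M K \<mu> (Suc n) = path_law M K \<mu> n \<bind> transition \<mu> n"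
  by (simp add: transition_def[abs_def] path_snoc_def[abs_def])

declare path_law.simps(2)[simp del]

lemma transition_0: "transition \<mu> 0 \<omega> = distr \<mu> (paths 1) (path_snoc 0 \<omega>)"
  by (simp add: transition_def)

lemma transition_Suc:
  "transition \<mu> (Suc n) \<omega> = distr (K (\<omega> n)) (paths (Suc (Suc n))) (path_snoc (Suc n) \<omega>)"
  by (simp add: transition_def)

lemma transition_independent_of_initial: "n \<noteq> 0 \<Longrightarrow> transition \<mu> n = transition \<nu> n"
  by (simp add: transition_def fun_eq_iff)

lemma measurable_kernel_component:
  "j < n \<Longrightarrow> (\<lambda>\<omega>. K (\<omega> j)) \<in> paths n \<rightarrow>\<^sub>M prob_algebra M"
  by (intro measurable_compose[OF measurable_component_singleton[of j "{..<n}"] kernel]) auto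

lemma measurable_transition_pair:
  "(\<lambda>(\<mu>, \<omega>). transition \<mu> n \<omega>) \<in> prob_algebra M \<Otimes>\<^sub>M paths n \<rightarrow>\<^sub>M prob_algebra (paths (Suc n))"
proof -
  have "(\<lambda>(\<mu>, \<omega>). if n = 0 then \<mu> else K (\<omega> (n - 1))) \<in> prob_algebra M \<Otimes>\<^sub>M paths n \<rightarrow>\<^sub>M prob_algebra M"
    using measurable_compose[OF measurable_snd measurable_kernel_component[of "n - 1" n]]
    by (cases "n = 0") (simp_all add: case_prod_beta')
  moreover have "(\<lambda>(x, y). path_snoc n (snd x) y) \<in> (prob_algebra M \<Otimes>\<^sub>M paths n) \<Otimes>\<^sub>M M \<rightarrow>\<^sub>M paths (Suc n)"
    using measurable_compose[OF measurable_Pair[OF measurable_compose[OF measurable_fst measurable_snd]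
          measurable_snd] measurable_path_snoc_pair]
    by (simp add: case_prod_beta')
  ultimately show ?thesis
    unfolding transition_def by (auto dest: measurable_distr_prob_space2 simp: case_prod_beta')
qed

lemma measurable_transition:
  "\<mu> \<in> space (prob_algebra M) \<Longrightarrow> transition \<mu> n \<in> paths n \<rightarrow>\<^sub>M subprob_algebra (paths (Suc n))"
  using measurable_prob_algebraD[OF measurable_Pair2[OF measurable_transition_pair]] by simp

lemma measurable_path_law: "(\<lambda>\<mu>. path_law M K \<mu> n) \<in> prob_algebra M \<rightarrow>\<^sub>M prob_algebra (paths n)"
proof (induction n)
  case 0
  show ?case
    by (simp add: prob_space_return space_PiM_lessThan_0)
next
  case (Suc n)
  then show ?case
    unfolding path_law_Suc_transition by (rule measurable_bind_prob_space2[OF _ measurable_transition_pair])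
qed

lemma measurable_path_law_return: "(\<lambda>y. path_law M K (return M y) n) \<in> M \<rightarrow>\<^sub>M prob_algebra (paths n)"
  by (rule measurable_compose[OF measurable_return_prob_space measurable_path_law])

lemma path_law_prob_algebra:
  "\<mu> \<in> space (prob_algebra M) \<Longrightarrow> path_law M K \<mu> n \<in> space (prob_algebra (paths n))"
  using measurable_space[OF measurable_path_law] .

lemma sets_path_law: "\<mu> \<in> space (prob_algebra M) \<Longrightarrow> sets (path_law M K \<mu> n) = sets (paths n)"
  using path_law_prob_algebra by (simp add: space_prob_algebra)

lemma bind_kernel_prob_algebra: "\<mu> \<in> space (prob_algebra M) \<Longrightarrow> \<mu> \<bind> K \<in> space (prob_algebra M)"
  using prob_space_bind'[OF _ kernel] sets_bind'[OF _ kernel] by (simp add: space_prob_algebra)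

lemma kernel_pow_Suc: "kernel_pow K (Suc k) \<mu> = kernel_pow K k \<mu> \<bind> K"
  by (simp add: kernel_pow_def)

lemma kernel_pow_prob_algebra:
  "\<mu> \<in> space (prob_algebra M) \<Longrightarrow> kernel_pow K k \<mu> \<in> space (prob_algebra M)"
  by (induction k) (simp_all add: kernel_pow_def bind_kernel_prob_algebra)

lemma path_law_one:
  assumes "\<mu> \<in> space (prob_algebra M)"
  shows "path_law M K \<mu> 1 = distr \<mu> (paths 1) (path_snoc 0 (\<lambda>_. undefined))"
proof -
  have "path_law M K \<mu> 1 = return (paths 0) (\<lambda>_. undefined) \<bind> transition \<mu> 0"
    by (simp add: path_law_Suc_transition)
  also have "\<dots> = transition \<mu> 0 (\<lambda>_. undefined)"
    by (rule bind_return[OF measurable_transition[OF assms]]) (simp add: space_PiM_lessThan_0)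
  finally show ?thesis
    by (simp add: transition_0)
qed

lemma return_prob_algebra: "y \<in> space M \<Longrightarrow> return M y \<in> space (prob_algebra M)"
  by (simp add: space_prob_algebra prob_space_return)

lemma path_law_return_one:
  "y \<in> space M \<Longrightarrow> path_law M K (return M y) 1 = return (paths 1) (path_snoc 0 (\<lambda>_. undefined) y)"
  by (simp only: path_law_one[OF return_prob_algebra] distr_return[OF measurable_path_snoc_0])

lemma path_law_bind_initial:
  assumes \<mu>: "\<mu> \<in> space (prob_algebra M)"
  shows "path_law M K \<mu> m = \<mu> \<bind> (\<lambda>y. path_law M K (return M y) m)"
proof -
  have sets_\<mu>: "sets \<mu> = sets M" and "prob_space \<mu>"
    using \<mu> by (auto simp: space_prob_algebra)
  then have space_\<mu>: "space \<mu> = space M" and "space \<mu> \<noteq> {}"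
    using sets_eq_imp_space_eq prob_space.not_empty by blast+
  show ?thesis
  proof (induction m)
    case 0
    then show ?case
      using \<open>prob_space \<mu>\<close> by (simp add: bind_const' subprob_space_return space_PiM_lessThan_0)
  next
    case (Suc m)
    show ?case
    proof (cases "m = 0")
      case True
      have "path_law M K \<mu> 1 = \<mu> \<bind> (\<lambda>y. return (paths 1) (path_snoc 0 (\<lambda>_. undefined) y))"
        unfolding path_law_one[OF \<mu>] using measurable_path_snoc_0 \<open>space \<mu> \<noteq> {}\<close>
        by (intro bind_return_distr'[symmetric]) (simp_all add: measurable_cong_sets[OF sets_\<mu> refl])
      also have "\<dots> = \<mu> \<bind> (\<lambda>y. path_law M K (return M y) 1)"
      proof (rule bind_cong[OF refl])
        fix y assume "y \<in> space \<mu>"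
        then show "return (paths 1) (path_snoc 0 (\<lambda>_. undefined) y) = path_law M K (return M y) 1"
          using space_\<mu> by (intro path_law_return_one[symmetric]) simp
      qed
      finally show ?thesis
        using True by simp
    next
      case False
      have "(\<lambda>y. path_law M K (return M y) m) \<in> \<mu> \<rightarrow>\<^sub>M subprob_algebra (paths m)"
        unfolding measurable_cong_sets[OF sets_\<mu> refl] by (rule measurable_prob_algebraD[OF measurable_path_law_return])
      then have "path_law M K \<mu> (Suc m) = \<mu> \<bind> (\<lambda>y. path_law M K (return M y) m \<bind> transition \<mu> m)"
        by (simp only: path_law_Suc_transition Suc.IH bind_assoc[OF _ measurable_transition[OF \<mu>]])
      also have "\<dots> = \<mu> \<bind> (\<lambda>y. path_law M K (return M y) (Suc m))"
      proof (rule bind_cong[OF refl])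
        fix y
        have "transition \<mu> m = transition (return M y) m"
          by (rule transition_independent_of_initial[OF False])
        then show "path_law M K (return M y) m \<bind> transition \<mu> m = path_law M K (return M y) (Suc m)"
          by (simp only: path_law_Suc_transition)
      qed
      finally show ?thesis .
    qed
  qed
qed

lemma distr_transition_path_shift:
  assumes "\<omega> \<in> space (paths (Suc m))"
  shows "distr (transition \<mu> (Suc m) \<omega>) (paths (Suc m)) (path_shift (Suc m) 1)
    = distr (K (\<omega> m)) (paths (Suc m)) (path_snoc m (path_shift m 1 \<omega>))"
proof -
  have sets_K: "sets (K (\<omega> m)) = sets M"
    using measurable_space[OF measurable_kernel_component[of m "Suc m"] assms]
    by (simp add: space_prob_algebra)
  have "path_snoc (Suc m) \<omega> \<in> K (\<omega> m) \<rightarrow>\<^sub>M paths (Suc (Suc m))"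
    by (simp only: measurable_cong_sets[OF sets_K refl] measurable_path_snoc[OF assms])
  then have "distr (transition \<mu> (Suc m) \<omega>) (paths (Suc m)) (path_shift (Suc m) 1)
      = distr (K (\<omega> m)) (paths (Suc m)) (path_shift (Suc m) 1 \<circ> path_snoc (Suc m) \<omega>)"
    unfolding transition_Suc by (intro distr_distr measurable_path_shift) simp_all
  then show ?thesis
    by (simp only: comp_def path_shift_path_snoc)
qed

lemma bind_path_law_one:
  assumes \<mu>: "\<mu> \<in> space (prob_algebra M)" and N: "N \<in> M \<rightarrow>\<^sub>M subprob_algebra X"
  shows "path_law M K \<mu> 1 \<bind> (\<lambda>\<omega>. N (\<omega> 0)) = \<mu> \<bind> N"
proof -
  have sets_\<mu>: "sets \<mu> = sets M" and "space \<mu> \<noteq> {}"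
    using \<mu> prob_space.not_empty by (auto simp: space_prob_algebra)
  have "path_snoc 0 (\<lambda>_. undefined) \<in> \<mu> \<rightarrow>\<^sub>M paths 1"
    unfolding measurable_cong_sets[OF sets_\<mu> refl] by (rule measurable_path_snoc_0)
  moreover have "(\<lambda>\<omega>. N (\<omega> 0)) \<in> paths 1 \<rightarrow>\<^sub>M subprob_algebra X"
    by (rule measurable_compose[OF measurable_component_singleton[of 0 "{..<1}" "\<lambda>_. M"] N]) simp
  ultimately have "distr \<mu> (paths 1) (path_snoc 0 (\<lambda>_. undefined)) \<bind> (\<lambda>\<omega>. N (\<omega> 0))
      = \<mu> \<bind> (\<lambda>y. N (path_snoc 0 (\<lambda>_. undefined) y 0))"
    using \<open>space \<mu> \<noteq> {}\<close> by (rule bind_distr)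
  then show ?thesis
    by (simp only: path_law_one[OF \<mu>]) (simp add: path_snoc_def)
qed

lemma path_law_one_bind_kernel:
  assumes \<mu>: "\<mu> \<in> space (prob_algebra M)"
  shows "path_law M K \<mu> 1 \<bind> (\<lambda>\<omega>. distr (K (\<omega> 0)) (paths 1) (path_snoc 0 (\<lambda>_. undefined)))
    = path_law M K (\<mu> \<bind> K) 1"
proof -
  let ?e = "path_snoc 0 (\<lambda>_. undefined) :: 'a \<Rightarrow> nat \<Rightarrow> 'a"
  have e: "?e \<in> M \<rightarrow>\<^sub>M paths 1"
    by (rule measurable_path_snoc_0)
  have sets_\<mu>: "sets \<mu> = sets M" and "space \<mu> \<noteq> {}"
    using \<mu> prob_space.not_empty by (auto simp: space_prob_algebra)
  have "(\<lambda>y. distr (K y) (paths 1) ?e) \<in> M \<rightarrow>\<^sub>M subprob_algebra (paths 1)"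
    by (intro measurable_prob_algebraD measurable_distr_prob_space2[OF kernel])
      (use measurable_compose[OF measurable_snd e] in \<open>simp add: case_prod_beta'\<close>)
  then have "path_law M K \<mu> 1 \<bind> (\<lambda>\<omega>. distr (K (\<omega> 0)) (paths 1) ?e) = \<mu> \<bind> (\<lambda>y. distr (K y) (paths 1) ?e)"
    by (rule bind_path_law_one[OF \<mu>])
  also have "\<dots> = distr (\<mu> \<bind> K) (paths 1) ?e"
    using measurable_prob_algebraD[OF kernel] \<open>space \<mu> \<noteq> {}\<close> e
    by (intro distr_bind[symmetric]) (simp_all add: measurable_cong_sets[OF sets_\<mu> refl])
  also have "\<dots> = path_law M K (\<mu> \<bind> K) 1"
    by (rule path_law_one[OF bind_kernel_prob_algebra[OF \<mu>], symmetric])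
  finally show ?thesis .
qed

lemma path_law_shift_one:
  assumes \<mu>: "\<mu> \<in> space (prob_algebra M)"
  shows "distr (path_law M K \<mu> (Suc m)) (paths m) (path_shift m 1) = path_law M K (\<mu> \<bind> K) m"
proof (induction m)
  case 0
  have "prob_space (path_law M K \<mu> 1)"
    using path_law_prob_algebra[OF \<mu>] by (simp add: space_prob_algebra)
  then show ?case
    using prob_space.distr_const[of _ "\<lambda>_. undefined" "paths 0"]
    by (simp add: path_shift_0 space_PiM_lessThan_0)
next
  case (Suc m)
  let ?P = "path_law M K \<mu> (Suc m)"
  have sets_P: "sets ?P = sets (paths (Suc m))" and "space ?P \<noteq> {}"
    using path_law_prob_algebra[OF \<mu>] prob_space.not_empty by (auto simp: space_prob_algebra)
  have transition_P: "transition \<mu> (Suc m) \<in> ?P \<rightarrow>\<^sub>M subprob_algebra (paths (Suc (Suc m)))"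
    unfolding measurable_cong_sets[OF sets_P refl] by (rule measurable_transition[OF \<mu>])
  have "distr (path_law M K \<mu> (Suc (Suc m))) (paths (Suc m)) (path_shift (Suc m) 1)
      = ?P \<bind> (\<lambda>\<omega>. distr (transition \<mu> (Suc m) \<omega>) (paths (Suc m)) (path_shift (Suc m) 1))"
    unfolding path_law_Suc_transition[of _ "Suc m"]
    using transition_P \<open>space ?P \<noteq> {}\<close> by (rule distr_bind) (rule measurable_path_shift, simp)
  also have "\<dots> = ?P \<bind> (\<lambda>\<omega>. distr (K (\<omega> m)) (paths (Suc m)) (path_snoc m (path_shift m 1 \<omega>)))"
    using sets_eq_imp_space_eq[OF sets_P] by (intro bind_cong refl distr_transition_path_shift) simp
  also have "\<dots> = path_law M K (\<mu> \<bind> K) (Suc m)"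
  proof (cases "m = 0")
    case True
    \<comment> \<open>the first transition draws from the initial law, not from K\<close>
    then show ?thesis
      using path_law_one_bind_kernel[OF \<mu>] by (simp add: path_shift_0)
  next
    case False
    have "transition (\<mu> \<bind> K) m \<in> paths m \<rightarrow>\<^sub>M subprob_algebra (paths (Suc m))"
      by (rule measurable_transition[OF bind_kernel_prob_algebra[OF \<mu>]])
    then have "distr ?P (paths m) (path_shift m 1) \<bind> transition (\<mu> \<bind> K) m
        = ?P \<bind> (\<lambda>\<omega>. transition (\<mu> \<bind> K) m (path_shift m 1 \<omega>))"
      using \<open>space ?P \<noteq> {}\<close>
      by (intro bind_distr) (simp_all add: measurable_cong_sets[OF sets_P refl] measurable_path_shift)
    also have "\<dots> = ?P \<bind> (\<lambda>\<omega>. distr (K (\<omega> m)) (paths (Suc m)) (path_snoc m (path_shift m 1 \<omega>)))"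
      using False by (simp add: transition_def path_shift_def)
    finally show ?thesis
      by (simp only: Suc.IH path_law_Suc_transition[of "\<mu> \<bind> K" m])
  qed
  finally show ?case .
qed

lemma path_law_shift:
  assumes \<mu>: "\<mu> \<in> space (prob_algebra M)" and "k \<le> n"
  shows "distr (path_law M K \<mu> n) (paths (n - k)) (path_shift (n - k) k) = path_law M K (kernel_pow K k \<mu>) (n - k)"
  using \<open>k \<le> n\<close>
proof (induction k)
  case 0
  have "distr (path_law M K \<mu> n) (paths n) (path_shift n 0) = distr (path_law M K \<mu> n) (paths n) (\<lambda>x. x)"
    using sets_eq_imp_space_eq[OF sets_path_law[OF \<mu>]] by (intro distr_cong) (simp_all add: path_shift_0_id)
  also have "\<dots> = path_law M K \<mu> n"
    by (rule distr_id2[OF sets_path_law[OF \<mu>, symmetric]])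
  finally show ?case
    by (simp add: kernel_pow_def)
next
  case (Suc k)
  define m where "m = n - Suc k"
  then have n_k: "n - k = Suc m"
    using Suc.prems by simp
  have shift_k: "path_shift (Suc m) k \<in> path_law M K \<mu> n \<rightarrow>\<^sub>M paths (Suc m)"
    unfolding measurable_cong_sets[OF sets_path_law[OF \<mu>] refl] using n_k by (intro measurable_path_shift) simp
  have "distr (path_law M K \<mu> n) (paths m) (path_shift m (Suc k))
      = distr (path_law M K \<mu> n) (paths m) (path_shift m 1 \<circ> path_shift (Suc m) k)"
    by (simp only: comp_def path_shift_path_shift)
  also have "\<dots> = distr (distr (path_law M K \<mu> n) (paths (Suc m)) (path_shift (Suc m) k)) (paths m) (path_shift m 1)"
    by (rule distr_distr[OF measurable_path_shift shift_k, symmetric]) simp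
  also have "\<dots> = path_law M K (kernel_pow K k \<mu> \<bind> K) m"
    using Suc n_k path_law_shift_one[OF kernel_pow_prob_algebra[OF \<mu>]] by simp
  finally show ?case
    by (simp add: m_def kernel_pow_Suc)
qed

lemma integral_path_law_shift:
  fixes G :: "(nat \<Rightarrow> 'a) \<Rightarrow> real"
  assumes \<mu>: "\<mu> \<in> space (prob_algebra M)" and "k \<le> n"
    and G: "G \<in> borel_measurable (paths (n - k))"
    and G_bounded: "\<And>z. z \<in> space (paths (n - k)) \<Longrightarrow> \<bar>G z\<bar> \<le> B"
  shows "(\<integral>x. G (path_shift (n - k) k x) \<partial>path_law M K \<mu> n)
    = (\<integral>y. (\<integral>z. G z \<partial>path_law M K (return M y) (n - k)) \<partial>kernel_pow K k \<mu>)"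
proof -
  have "path_shift (n - k) k \<in> path_law M K \<mu> n \<rightarrow>\<^sub>M paths (n - k)"
    unfolding measurable_cong_sets[OF sets_path_law[OF \<mu>] refl]
    using \<open>k \<le> n\<close> by (intro measurable_path_shift) simp
  then have "(\<integral>x. G (path_shift (n - k) k x) \<partial>path_law M K \<mu> n)
      = (\<integral>z. G z \<partial>path_law M K (kernel_pow K k \<mu>) (n - k))"
    by (simp add: integral_distr[OF _ G, symmetric] path_law_shift[OF \<mu> \<open>k \<le> n\<close>])
  also have "\<dots> = (\<integral>z. G z \<partial>kernel_pow K k \<mu> \<bind> (\<lambda>y. path_law M K (return M y) (n - k)))"
    by (simp only: path_law_bind_initial[OF kernel_pow_prob_algebra[OF \<mu>]])
  also have "\<dots> = (\<integral>y. (\<integral>z. G z \<partial>path_law M K (return M y) (n - k)) \<partial>kernel_pow K k \<mu>)"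
  proof (rule integral_bind[OF G G_bounded])
    have sets_k: "sets (kernel_pow K k \<mu>) = sets M" and "prob_space (kernel_pow K k \<mu>)"
      using kernel_pow_prob_algebra[OF \<mu>] by (auto simp: space_prob_algebra)
    then show "finite_measure (kernel_pow K k \<mu>)"
      by (simp add: prob_space.finite_measure)
    show "(\<lambda>y. path_law M K (return M y) (n - k)) \<in> kernel_pow K k \<mu> \<rightarrow>\<^sub>M subprob_algebra (paths (n - k))"
      unfolding measurable_cong_sets[OF sets_k refl] by (rule measurable_prob_algebraD[OF measurable_path_law_return])
    have "prob_space (path_law M K (return M y) (n - k))" if "y \<in> space M" for y
      using path_law_prob_algebra[OF return_prob_algebra[OF that]] by (simp add: space_prob_algebra)
    then show "AE y in kernel_pow K k \<mu>. emeasure (path_law M K (return M y) (n - k))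
        (space (path_law M K (return M y) (n - k))) \<le> ennreal 1"
      using sets_eq_imp_space_eq[OF sets_k] by (auto intro!: AE_I2 simp: prob_space.emeasure_space_1)
  qed
  finally show ?thesis .
qed

lemma measurable_integral_path_law_return:
  fixes G :: "(nat \<Rightarrow> 'a) \<Rightarrow> real"
  assumes "G \<in> borel_measurable (paths m)"
  shows "(\<lambda>y. \<integral>z. G z \<partial>path_law M K (return M y) m) \<in> borel_measurable M"
  by (rule measurable_compose[OF measurable_prob_algebraD[OF measurable_path_law_return]
      integral_measurable_subprob_algebra[OF assms]])

lemma integral_path_law_telescope:
  fixes h :: "(nat \<Rightarrow> 'a) \<Rightarrow> real" and G :: "nat \<Rightarrow> (nat \<Rightarrow> 'a) \<Rightarrow> real"
  assumes \<mu>: "\<mu> \<in> space (prob_algebra M)"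
    and G: "\<And>k. k < n \<Longrightarrow> G k \<in> borel_measurable (paths (n - k))"
    and G_bounded: "\<And>k z. k < n \<Longrightarrow> z \<in> space (paths (n - k)) \<Longrightarrow> \<bar>G k z\<bar> \<le> B k"
    and h: "\<And>x. x \<in> space (paths n) \<Longrightarrow> h x = a + (\<Sum>k<n. G k (path_shift (n - k) k x))"
  shows "(\<integral>x. h x \<partial>path_law M K \<mu> n)
    = a + (\<Sum>k<n. \<integral>y. (\<integral>z. G k z \<partial>path_law M K (return M y) (n - k)) \<partial>kernel_pow K k \<mu>)"
proof -
  interpret prob_space "path_law M K \<mu> n"
    using path_law_prob_algebra[OF \<mu>] by (simp add: space_prob_algebra)
  have integrable: "integrable (path_law M K \<mu> n) (\<lambda>x. G k (path_shift (n - k) k x))" if "k < n" for k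
  proof -
    have shift: "path_shift (n - k) k \<in> paths n \<rightarrow>\<^sub>M paths (n - k)"
      using that by (intro measurable_path_shift) simp
    show ?thesis
      using measurable_compose[OF shift G[OF that]] measurable_space[OF shift] G_bounded[OF that]
      by (intro integrable_bounded_prob_algebra[OF path_law_prob_algebra[OF \<mu>], where B="B k"]) auto
  qed
  have "(\<integral>x. h x \<partial>path_law M K \<mu> n) = (\<integral>x. a + (\<Sum>k<n. G k (path_shift (n - k) k x)) \<partial>path_law M K \<mu> n)"
    using sets_eq_imp_space_eq[OF sets_path_law[OF \<mu>]] h by (intro Bochner_Integration.integral_cong) auto
  also have "\<dots> = a + (\<integral>x. (\<Sum>k<n. G k (path_shift (n - k) k x)) \<partial>path_law M K \<mu> n)"
    using integrable by (subst Bochner_Integration.integral_add) (auto simp: prob_space)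
  also have "\<dots> = a + (\<Sum>k<n. \<integral>x. G k (path_shift (n - k) k x) \<partial>path_law M K \<mu> n)"
    using integrable by (subst Bochner_Integration.integral_sum) auto
  also have "\<dots> = a + (\<Sum>k<n. \<integral>y. (\<integral>z. G k z \<partial>path_law M K (return M y) (n - k)) \<partial>kernel_pow K k \<mu>)"
    using G G_bounded by (auto intro!: sum.cong integral_path_law_shift[OF \<mu>])
  finally show ?thesis .
qed

lemma abs_integral_path_law_diff_le_dTV:
  fixes h :: "(nat \<Rightarrow> 'a) \<Rightarrow> real" and G :: "nat \<Rightarrow> (nat \<Rightarrow> 'a) \<Rightarrow> real"
  assumes \<mu>: "\<mu> \<in> space (prob_algebra M)" and \<nu>: "\<nu> \<in> space (prob_algebra M)"
    and G: "\<And>k. k < n \<Longrightarrow> G k \<in> borel_measurable (paths (n - k))"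
    and G_bounded: "\<And>k z. k < n \<Longrightarrow> z \<in> space (paths (n - k)) \<Longrightarrow> \<bar>G k z\<bar> \<le> c k"
    and h: "\<And>x. x \<in> space (paths n) \<Longrightarrow> h x = a + (\<Sum>k<n. G k (path_shift (n - k) k x))"
  shows "\<bar>(\<integral>x. h x \<partial>path_law M K \<mu> n) - (\<integral>x. h x \<partial>path_law M K \<nu> n)\<bar>
    \<le> (\<Sum>k<n. 2 * c k * dTV M (kernel_pow K k \<mu>) (kernel_pow K k \<nu>))"
proof -
  define \<Psi> where "\<Psi> k y = (\<integral>z. G k z \<partial>path_law M K (return M y) (n - k))" for k y
  have \<Psi>: "\<Psi> k \<in> borel_measurable M" if "k < n" for k
    unfolding \<Psi>_def by (rule measurable_integral_path_law_return[OF G[OF that]])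
  have \<Psi>_bounded: "\<bar>\<Psi> k y\<bar> \<le> c k" if "k < n" "y \<in> space M" for k y
    unfolding \<Psi>_def using G[OF that(1)] G_bounded[OF that(1)]
    by (rule abs_integral_le_bound_prob_algebra[OF path_law_prob_algebra[OF return_prob_algebra[OF that(2)]]])
  have "\<bar>(\<integral>x. h x \<partial>path_law M K \<mu> n) - (\<integral>x. h x \<partial>path_law M K \<nu> n)\<bar>
      = \<bar>\<Sum>k<n. (\<integral>y. \<Psi> k y \<partial>kernel_pow K k \<mu>) - (\<integral>y. \<Psi> k y \<partial>kernel_pow K k \<nu>)\<bar>"
    by (simp only: integral_path_law_telescope[OF _ G G_bounded h] \<mu> \<nu> \<Psi>_def sum_subtractf add_diff_cancel_left)
  also have "\<dots> \<le> (\<Sum>k<n. \<bar>(\<integral>y. \<Psi> k y \<partial>kernel_pow K k \<mu>) - (\<integral>y. \<Psi> k y \<partial>kernel_pow K k \<nu>)\<bar>)"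
    by (rule sum_abs)
  also have "\<dots> \<le> (\<Sum>k<n. 2 * c k * dTV M (kernel_pow K k \<mu>) (kernel_pow K k \<nu>))"
  proof (rule sum_mono)
    fix k assume "k \<in> {..<n}"
    then show "\<bar>(\<integral>y. \<Psi> k y \<partial>kernel_pow K k \<mu>) - (\<integral>y. \<Psi> k y \<partial>kernel_pow K k \<nu>)\<bar>
        \<le> 2 * c k * dTV M (kernel_pow K k \<mu>) (kernel_pow K k \<nu>)"
      using \<Psi> \<Psi>_bounded by (intro abs_integral_diff_le_dTV kernel_pow_prob_algebra \<mu> \<nu>) auto
  qed
  finally show ?thesis .
qed

end

theorem lemma1:
  fixes M :: "'a measure" and K :: "'a \<Rightarrow> 'a measure"
    and xi xi' :: "'a measure" and n :: nat and c :: "nat \<Rightarrow> real"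
    and h :: "(nat \<Rightarrow> 'a) \<Rightarrow> real"
  assumes K: "K \<in> M \<rightarrow>\<^sub>M prob_algebra M"
    and xi: "prob_space xi" "sets xi = sets M"
    and xi': "prob_space xi'" "sets xi' = sets M"
    and n: "n \<ge> 1"
    and c: "\<And>i. i < n \<Longrightarrow> c i \<ge> 0"
    and h_meas: "h \<in> borel_measurable (PiM {..<n} (\<lambda>_. M))"
    and h_lip: "\<And>x y. x \<in> space (PiM {..<n} (\<lambda>_. M)) \<Longrightarrow> y \<in> space (PiM {..<n} (\<lambda>_. M)) \<Longrightarrow>
        \<bar>h x - h y\<bar> \<le> (\<Sum>i<n. c i * (if x i \<noteq> y i then 1 else 0))"
  shows "\<bar>(\<integral>x. h x \<partial>path_law M K xi n) - (\<integral>x. h x \<partial>path_law M K xi' n)\<bar>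
           \<le> 2 * (\<Sum>i<n. c i * dTV M (kernel_pow K i xi) (kernel_pow K i xi'))"
proof -
  interpret markov_kernel M K
    by unfold_locales (rule K)
  have \<xi>: "xi \<in> space (prob_algebra M)" "xi' \<in> space (prob_algebra M)"
    using xi xi' by (simp_all add: space_prob_algebra)
  obtain y0 where "y0 \<in> space M"
    using prob_space.not_empty[OF xi(1)] sets_eq_imp_space_eq[OF xi(2)] by auto
  then obtain G a where G: "\<And>k. k < n \<Longrightarrow> G k \<in> borel_measurable (paths (n - k))"
    and G_bounded: "\<And>k z. k < n \<Longrightarrow> z \<in> space (paths (n - k)) \<Longrightarrow> \<bar>G k z\<bar> \<le> c k"
    and h: "\<And>x. x \<in> space (paths n) \<Longrightarrow> h x = a + (\<Sum>k<n. G k (path_shift (n - k) k x))"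
    using bounded_differences_telescope[OF _ h_meas h_lip c] by blast
  then have "\<bar>(\<integral>x. h x \<partial>path_law M K xi n) - (\<integral>x. h x \<partial>path_law M K xi' n)\<bar>
      \<le> (\<Sum>i<n. 2 * c i * dTV M (kernel_pow K i xi) (kernel_pow K i xi'))"
    by (rule abs_integral_path_law_diff_le_dTV[OF \<xi>])
  also have "\<dots> = 2 * (\<Sum>i<n. c i * dTV M (kernel_pow K i xi) (kernel_pow K i xi'))"
    by (simp add: sum_distrib_left mult.assoc)
  finally show ?thesis .
qed

end
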